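(* For every $k\ge1$ and every vector $\vec v_0$ of natural numbers over the counters of $\mathcal B_k$ such that $\vec v_0(d_i)=\vec v_0(d'_i)=0$ for all $i<k$, the BVASS $\mathcal B_k$ has a $(q^{\mathrm{init}}_k,\vec v_0)$-rooted $\{q^{\mathrm{leaf}}\}$-leaf-covering deduction tree if and only if $\vec v_0(d_k)\ge\mathrm{tower}(k)$.
   Context: A BVASS of dimension $D$ with counters indexed by a finite set consists of a finite set of states, unary rules $q\xrightarrow{\vec u}q_1$ with $\vec u\in\mathbb Z^D$, and split rules $q\to q_1+q_2$. A deduction tree is a finite tree labelled by configurations $(q,\vec v)$, $\vec v\in\mathbb N^D$, where each internal node $(q,\vec v)$ has either one child $(q_1,\vec v+\vec u)$ (with $\vec v+\vec u\ge\vec 0$) for a unary rule $(q,\vec u,q_1)$, or two children $(q_1,\vec v_1),(q_2,\vec v_2)$ with $\vec v_1+\vec v_2=\vec v$ for a split rule $(q,q_1,q_2)$. It is $(q,\vec v)$-rooted if its root is labelled $(q,\vec v)$ and $Q_\ell$-leaf-covering if the state of every leaf label is in $Q_\ell$ (no condition on vectors). $\mathrm{tower}(0)=1$, $\mathrm{tower}(n+1)=2^{\mathrm{tower}(n)}$. The BVASS $\mathcal B_k$ has counters $d_1,\dots,d_k,d'_1,\dots,d'_{k-1}$, defined recursively. $\mathcal B_1$ has states $q^{\mathrm{init}}_1,q^{\mathrm{leaf}}$ and one unary rule $q^{\mathrm{init}}_1\xrightarrow{-2\vec e_{d_1}}q^{\mathrm{leaf}}$. For $k>1$, $\mathcal B_k$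 consists of $\mathcal B_{k-1}$ plus new states $q^{\mathrm{init}}_k,q^1_k,q^2_k,q^{\mathrm{loop}}_k$ and rules: $q^{\mathrm{init}}_k\xrightarrow{\vec e_{d_{k-1}}}q^1_k$; $q^1_k\xrightarrow{-\vec e_{d_{k-1}}+2\vec e_{d'_{k-1}}}q^1_k$; $q^1_k\xrightarrow{\vec 0}q^2_k$; $q^2_k\xrightarrow{-\vec e_{d'_{k-1}}+\vec e_{d_{k-1}}}q^2_k$; split $q^2_k\to q^{\mathrm{loop}}_k+q^{\mathrm{loop}}_k$; $q^{\mathrm{loop}}_k\xrightarrow{\vec 0}q^{\mathrm{init}}_k$; and $q^{\mathrm{loop}}_k\xrightarrow{-\vec e_{d_k}}q^{\mathrm{init}}_{k-1}$. Here $\vec e_c$ denotes the unit vector for counter $c$. *)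

theory Defs
  imports Main
begin

text \<open>Vectors of N^D are represented as functions 'c => nat that vanish outside the
counter set.\<close>

record ('q, 'c) bvass =
  ctrs   :: "'c set"
  states :: "'q set"
  urules :: "('q \<times> ('c \<Rightarrow> int) \<times> 'q) set"
  srules :: "('q \<times> 'q \<times> 'q) set"

datatype ('q, 'c) dtree =
    DLeaf 'q "'c \<Rightarrow> nat"
  | DUn 'q "'c \<Rightarrow> nat" "('q, 'c) dtree"
  | DSplit 'q "'c \<Rightarrow> nat" "('q, 'c) dtree" "('q, 'c) dtree"

fun root :: "('q, 'c) dtree \<Rightarrow> 'q \<times> ('c \<Rightarrow> nat)" where
  "root (DLeaf q v) = (q, v)"
| "root (DUn q v t) = (q, v)"
| "root (DSplit q v t1 t2) = (q, v)"

definition is_config :: "('q, 'c) bvass \<Rightarrow> 'q \<Rightarrow> ('c \<Rightarrow> nat) \<Rightarrow> bool" where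
  "is_config B q v \<longleftrightarrow> q \<in> states B \<and> (\<forall>c. c \<notin> ctrs B \<longrightarrow> v c = 0)"

inductive is_dtree :: "('q, 'c) bvass \<Rightarrow> ('q, 'c) dtree \<Rightarrow> bool" for B where
  leaf: "is_config B q v \<Longrightarrow> is_dtree B (DLeaf q v)"
| unary: "\<lbrakk> is_config B q v; (q, u, q1) \<in> urules B; is_dtree B t;
            root t = (q1, w); \<forall>c. int (w c) = int (v c) + u c \<rbrakk>
          \<Longrightarrow> is_dtree B (DUn q v t)"
| split: "\<lbrakk> is_config B q v; (q, q1, q2) \<in> srules B; is_dtree B t1; is_dtree B t2;
            root t1 = (q1, v1); root t2 = (q2, v2); \<forall>c. v1 c + v2 c = v c \<rbrakk>
          \<Longrightarrow> is_dtree B (DSplit q v t1 t2)"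

fun leaf_states :: "('q, 'c) dtree \<Rightarrow> 'q set" where
  "leaf_states (DLeaf q v) = {q}"
| "leaf_states (DUn q v t) = leaf_states t"
| "leaf_states (DSplit q v t1 t2) = leaf_states t1 \<union> leaf_states t2"

definition leaf_covering :: "'q set \<Rightarrow> ('q, 'c) dtree \<Rightarrow> bool" where
  "leaf_covering Ql t \<longleftrightarrow> leaf_states t \<subseteq> Ql"

datatype ctr = d nat | d' nat

datatype st = QInit nat | Q1 nat | Q2 nat | QLoop nat | QLeaf

definition e :: "ctr \<Rightarrow> ctr \<Rightarrow> int" where
  "e c = (\<lambda>x. if x = c then 1 else 0)"

fun tower :: "nat \<Rightarrow> nat" where
  "tower 0 = 1"
| "tower (Suc n) = 2 ^ tower n"

text \<open>B 0 is a dummy (only k >= 1 is meaningful). B (Suc (Suc j)) is B_k for k = j+2,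
built from B_{k-1} = B (Suc j).\<close>

fun B :: "nat \<Rightarrow> (st, ctr) bvass" where
  "B 0 = \<lparr> ctrs = {}, states = {}, urules = {}, srules = {} \<rparr>"
| "B (Suc 0) = \<lparr> ctrs = {d 1}, states = {QInit 1, QLeaf},
                 urules = {(QInit 1, \<lambda>x. -2 * e (d 1) x, QLeaf)}, srules = {} \<rparr>"
| "B (Suc (Suc j)) = (let k = Suc (Suc j); P = B (Suc j) in
     \<lparr> ctrs = ctrs P \<union> {d k, d' (k - 1)},
       states = states P \<union> {QInit k, Q1 k, Q2 k, QLoop k},
       urules = urules P \<union>
         { (QInit k, e (d (k - 1)), Q1 k),
           (Q1 k, \<lambda>x. - e (d (k - 1)) x + 2 * e (d' (k - 1)) x, Q1 k),
           (Q1 k, \<lambda>x. 0, Q2 k),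
           (Q2 k, \<lambda>x. - e (d' (k - 1)) x + e (d (k - 1)) x, Q2 k),
           (QLoop k, \<lambda>x. 0, QInit k),
           (QLoop k, \<lambda>x. - e (d k) x, QInit (k - 1)) },
       srules = srules P \<union> { (Q2 k, QLoop k, QLoop k) } \<rparr>)"

end

theory Submission
  imports Defs
begin

(* Write c = v(d_k), x = v(d_{k-1}), y = v(d'_{k-1}) and T = tower (k-1).  One round of
   level k adds 1 to x, turns x into 2x copies of d'_{k-1}, turns them back and splits the
   configuration, halving c; a QLoop node may leave level k by spending one unit of d_k on
   a configuration that must satisfy the level k-1 requirement x >= T.

   Soundness: the quantity 4^T <= c^2 * 2^(2x+y) (at QInit/QLoop; shifted versions at Q1,
   Q2) is an invariant of every leaf-covering tree, read from the leaves to the root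
   (predicate good).  At the root, with x = y = 0, it says 2^T <= c, i.e. c >= tower k.
   Completeness: by induction on k.  One round of level k (lemma round) reduces "QInit k with
   c >= 2^(m+1)" to "QLoop k with larger x and c >= 2^m"; iterating until x >= T and then
   descending gives all QLoop configurations needed (lemma loop_derivable). *)

lemma e_apply [simp]: "e c x = (if x = c then 1 else 0)"
  by (simp add: e_def)

definition level_states :: "nat \<Rightarrow> st set" where
  "level_states k = {QInit k, Q1 k, Q2 k, QLoop k}"

definition level_urules :: "nat \<Rightarrow> (st \<times> (ctr \<Rightarrow> int) \<times> st) set" where
  "level_urules k =
     { (QInit k, e (d (k - 1)), Q1 k),
       (Q1 k, \<lambda>x. - e (d (k - 1)) x + 2 * e (d' (k - 1)) x, Q1 k),
       (Q1 k, \<lambda>x. 0, Q2 k),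
       (Q2 k, \<lambda>x. - e (d' (k - 1)) x + e (d (k - 1)) x, Q2 k),
       (QLoop k, \<lambda>x. 0, QInit k),
       (QLoop k, \<lambda>x. - e (d k) x, QInit (k - 1)) }"

(* The recursive definition of B restated with the level sets, so that
   membership and inversion proofs need not unfold the rules repeatedly. *)
lemma B_Suc_Suc:
  "B (Suc (Suc j)) =
     \<lparr> ctrs = ctrs (B (Suc j)) \<union> {d (Suc (Suc j)), d' (Suc j)},
       states = states (B (Suc j)) \<union> level_states (Suc (Suc j)),
       urules = urules (B (Suc j)) \<union> level_urules (Suc (Suc j)),
       srules = srules (B (Suc j)) \<union> {(Q2 (Suc (Suc j)), QLoop (Suc (Suc j)), QLoop (Suc (Suc j)))} \<rparr>"
  by (simp add: Let_def level_states_def level_urules_def)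

declare B.simps(3) [simp del]

definition subsystem :: "('q, 'c) bvass \<Rightarrow> ('q, 'c) bvass \<Rightarrow> bool" where
  "subsystem P Q \<longleftrightarrow> ctrs P \<subseteq> ctrs Q \<and> states P \<subseteq> states Q
     \<and> urules P \<subseteq> urules Q \<and> srules P \<subseteq> srules Q"

lemma B_subsystem:
  assumes "k \<le> n" shows "subsystem (B k) (B n)"
  using assms
proof (induction n rule: dec_induct)
  case base
  show ?case by (simp add: subsystem_def)
next
  case (step n)
  have "subsystem (B n) (B (Suc n))"
    by (cases n) (auto simp: subsystem_def B_Suc_Suc)
  with step.IH show ?case
    unfolding subsystem_def by blast
qed

lemma level_in_B:
  assumes "2 \<le> k" "k \<le> n"
  shows "level_urules k \<subseteq> urules (B n)" "(Q2 k, QLoop k, QLoop k) \<in> srules (B n)"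
    "d k \<in> ctrs (B n)" "d (k - 1) \<in> ctrs (B n)" "d' (k - 1) \<in> ctrs (B n)"
proof -
  obtain j where k: "k = Suc (Suc j)"
    using assms(1) by (metis add_2_eq_Suc le_Suc_ex)
  have "d (Suc j) \<in> ctrs (B (Suc j))"
    by (cases j) (simp_all add: B_Suc_Suc)
  then have "level_urules k \<subseteq> urules (B k)" "(Q2 k, QLoop k, QLoop k) \<in> srules (B k)"
    "{d k, d (k - 1), d' (k - 1)} \<subseteq> ctrs (B k)"
    by (simp_all add: k B_Suc_Suc)
  with B_subsystem[OF assms(2)] show "level_urules k \<subseteq> urules (B n)"
    "(Q2 k, QLoop k, QLoop k) \<in> srules (B n)"
    "d k \<in> ctrs (B n)" "d (k - 1) \<in> ctrs (B n)" "d' (k - 1) \<in> ctrs (B n)"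
    unfolding subsystem_def by blast+
qed

lemma base_in_B:
  assumes "1 \<le> n"
  shows "(QInit 1, \<lambda>x. -2 * e (d 1) x, QLeaf) \<in> urules (B n)"
    "QLeaf \<in> states (B n)" "d 1 \<in> ctrs (B n)"
  using B_subsystem[OF assms] by (auto simp: subsystem_def)

lemma urule_source_state: "(q, u, q1) \<in> urules (B n) \<Longrightarrow> q \<in> states (B n)"
  by (induction n rule: B.induct) (auto simp: B_Suc_Suc level_urules_def level_states_def)

lemma srule_source_state: "(q, q1, q2) \<in> srules (B n) \<Longrightarrow> q \<in> states (B n)"
  by (induction n rule: B.induct) (auto simp: B_Suc_Suc level_states_def)

lemma urules_B_cases:
  assumes "(q, u, q1) \<in> urules (B n)"
  shows "(q, u, q1) = (QInit 1, \<lambda>x. -2 * e (d 1) x, QLeaf)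
    \<or> (\<exists>k\<ge>2. (q, u, q1) \<in> level_urules k)"
  using assms
  by (induction n rule: B.induct) (auto simp: B_Suc_Suc)

lemma srules_B_cases:
  assumes "(q, q1, q2) \<in> srules (B n)"
  shows "\<exists>k\<ge>2. q = Q2 k \<and> q1 = QLoop k \<and> q2 = QLoop k"
  using assms
  by (induction n rule: B.induct) (auto simp: B_Suc_Suc)

(* bound T c p expresses 2^T <= c * sqrt(2)^p in integers; it is the shape of the
   soundness invariant, with c = v(d_k) and p a weighted sum of the level k-1 counters. *)
definition bound :: "nat \<Rightarrow> nat \<Rightarrow> nat \<Rightarrow> bool" where
  "bound T c p \<longleftrightarrow> 4 ^ T \<le> c\<^sup>2 * 2 ^ p"

lemma four_power: "(4::nat) ^ n = (2 ^ n)\<^sup>2"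
  by (simp add: power2_eq_square flip: power_mult_distrib)

lemma bound_zero: "bound T c 0 \<longleftrightarrow> 2 ^ T \<le> c"
  by (simp add: bound_def four_power power2_le_iff_abs_le)

lemma bound_mono:
  "bound T c p \<Longrightarrow> p \<le> p' \<Longrightarrow> bound T c p'"
proof -
  assume "bound T c p" "p \<le> p'"
  have "(2::nat) ^ p \<le> 2 ^ p'"
    using \<open>p \<le> p'\<close> by (simp add: power_increasing)
  with \<open>bound T c p\<close> show ?thesis
    unfolding bound_def by (meson le_trans mult_le_mono2)
qed

(* Adding 2 to the weight pays for one doubling of the target (QInit -> Q1). *)
lemma bound_Suc: "bound (Suc T) c (Suc (Suc p)) \<longleftrightarrow> bound T c p"
  by (simp add: bound_def power_add mult_ac)

lemma bound_of_large: "T \<le> x \<Longrightarrow> 1 \<le> c \<Longrightarrow> bound T c (2 * x + y)"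
proof -
  assume "T \<le> x" "1 \<le> c"
  have "(4::nat) ^ T \<le> 4 ^ x"
    using \<open>T \<le> x\<close> by (simp add: power_increasing)
  also have "\<dots> \<le> 2 ^ (2 * x + y)"
    by (simp add: power_add power_mult)
  also have "\<dots> \<le> c\<^sup>2 * 2 ^ (2 * x + y)"
    using \<open>1 \<le> c\<close> by simp
  finally show ?thesis by (simp add: bound_def)
qed

lemma bound_sqrt:
  assumes "bound T c (2 * p + q)" shows "2 ^ T \<le> c * 2 ^ (p + q)"
proof -
  have "(2 ^ T)\<^sup>2 \<le> c\<^sup>2 * 2 ^ (2 * p + q)"
    using assms by (simp add: bound_def four_power)
  also have "\<dots> \<le> c\<^sup>2 * 2 ^ (2 * (p + q))"
    by simp
  also have "\<dots> = (c * 2 ^ (p + q))\<^sup>2"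
    by (simp only: power_even_eq power_mult_distrib)
  finally show ?thesis
    by (simp add: power2_le_iff_abs_le)
qed

(* Split rule: two subtrees satisfying the QLoop bound yield the Q2 bound
   with target one higher, by 4 c1 c2 <= (c1 + c2)^2. *)
lemma bound_split:
  assumes "bound T c1 (2 * p1 + q1)" "bound T c2 (2 * p2 + q2)"
  shows "bound (Suc T) (c1 + c2) (p1 + q1 + p2 + q2)"
proof -
  have "(4::nat) ^ Suc T = 4 * (2 ^ T * 2 ^ T)"
    by (simp add: four_power power2_eq_square)
  also have "\<dots> \<le> 4 * ((c1 * 2 ^ (p1 + q1)) * (c2 * 2 ^ (p2 + q2)))"
    using bound_sqrt[OF assms(1)] bound_sqrt[OF assms(2)] by (simp add: mult_le_mono)
  also have "\<dots> = (4 * c1 * c2) * 2 ^ (p1 + q1 + p2 + q2)"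
    by (simp add: power_add)
  also have "\<dots> \<le> (c1 + c2)\<^sup>2 * 2 ^ (p1 + q1 + p2 + q2)"
  proof -
    have "int (4 * c1 * c2) \<le> int ((c1 + c2)\<^sup>2)"
      using zero_le_power2[of "int c1 - int c2"] by (simp add: power2_eq_square algebra_simps)
    then have "4 * c1 * c2 \<le> (c1 + c2)\<^sup>2"
      by linarith
    then show ?thesis by simp
  qed
  finally show ?thesis by (simp add: bound_def)
qed

definition low_zero :: "nat \<Rightarrow> (ctr \<Rightarrow> nat) \<Rightarrow> bool" where
  "low_zero j v \<longleftrightarrow> (\<forall>i. 1 \<le> i \<and> i < j \<longrightarrow> v (d i) = 0 \<and> v (d' i) = 0)"

fun good :: "st \<Rightarrow> (ctr \<Rightarrow> nat) \<Rightarrow> bool" where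
  "good (QInit k) v = (if k = 1 then tower 1 \<le> v (d 1) else 2 \<le> k \<longrightarrow> low_zero (k - 1) v \<longrightarrow>
      bound (tower (k - 1)) (v (d k)) (2 * v (d (k - 1)) + v (d' (k - 1))))"
| "good (QLoop k) v = (2 \<le> k \<longrightarrow> low_zero (k - 1) v \<longrightarrow>
      bound (tower (k - 1)) (v (d k)) (2 * v (d (k - 1)) + v (d' (k - 1))))"
| "good (Q1 k) v = (2 \<le> k \<longrightarrow> low_zero (k - 1) v \<longrightarrow>
      bound (Suc (tower (k - 1))) (v (d k)) (2 * v (d (k - 1)) + v (d' (k - 1))))"
| "good (Q2 k) v = (2 \<le> k \<longrightarrow> low_zero (k - 1) v \<longrightarrow>
      bound (Suc (tower (k - 1))) (v (d k)) (v (d (k - 1)) + v (d' (k - 1))))"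
| "good QLeaf v = True"

lemma good_init_tower:
  assumes "good (QInit j) v" "1 \<le> j" "low_zero j v"
  shows "tower j \<le> v (d j)"
proof (cases "j = 1")
  case True
  then show ?thesis using assms(1) by simp
next
  case False
  then have j: "2 \<le> j" using assms(2) by simp
  have "low_zero (j - 1) v" "v (d (j - 1)) = 0" "v (d' (j - 1)) = 0"
    using assms(3) j by (auto simp: low_zero_def)
  then have "bound (tower (j - 1)) (v (d j)) 0"
    using assms(1) j by simp
  then have "2 ^ tower (j - 1) \<le> v (d j)"
    by (simp add: bound_zero)
  moreover have "tower j = 2 ^ tower (j - 1)"
    using j by (cases j) auto
  ultimately show ?thesis by simp
qed

lemma level_urule_frame:
  assumes "(q, u, q1) \<in> level_urules k" "c \<notin> {d k, d (k - 1), d' (k - 1)}"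
  shows "u c = 0"
  using assms by (auto simp: level_urules_def)

lemma level_urule_low_zero:
  assumes r: "(q, u, q1) \<in> level_urules k" and H: "\<forall>c. int (w c) = int (v c) + u c"
    and "j \<le> k - 1"
  shows "low_zero j w \<longleftrightarrow> low_zero j v"
proof -
  have "w c = v c" if "c \<notin> {d k, d (k - 1), d' (k - 1)}" for c
    using H level_urule_frame[OF r that] by (metis add.right_neutral of_nat_eq_iff)
  then show ?thesis
    using \<open>j \<le> k - 1\<close> by (auto simp: low_zero_def)
qed

lemma good_descend:
  assumes k: "2 \<le> k" and g: "good (QInit (k - 1)) w"
    and low: "low_zero (k - 1) w \<longleftrightarrow> low_zero (k - 1) v"
    and x: "w (d (k - 1)) = v (d (k - 1))" and c: "w (d k) + 1 = v (d k)"
  shows "good (QLoop k) v"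
proof -
  have "bound (tower (k - 1)) (v (d k)) (2 * v (d (k - 1)) + v (d' (k - 1)))"
    if "low_zero (k - 1) v"
  proof (rule bound_of_large)
    show "tower (k - 1) \<le> v (d (k - 1))"
      using good_init_tower[of "k - 1" w] g low k that x by simp
    show "1 \<le> v (d k)" using c by simp
  qed
  then show ?thesis by simp
qed

lemma unary_good:
  assumes r: "(q, u, q1) \<in> urules (B n)" and g: "good q1 w"
    and H: "\<forall>c. int (w c) = int (v c) + u c"
  shows "good q v"
  using urules_B_cases[OF r]
proof (elim disjE exE conjE)
  assume "(q, u, q1) = (QInit 1, \<lambda>x. -2 * e (d 1) x, QLeaf)"
  then show ?thesis using H[rule_format, of "d 1"] by simp
next
  fix k assume k: "2 \<le> k" and lr: "(q, u, q1) \<in> level_urules k"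
  have low: "low_zero (k - 1) w \<longleftrightarrow> low_zero (k - 1) v"
    by (rule level_urule_low_zero[OF lr H]) simp
  have ne: "k - 1 \<noteq> k" "k \<noteq> 1" using k by auto
  note at = H[rule_format, of "d k"] H[rule_format, of "d (k - 1)"] H[rule_format, of "d' (k - 1)"]
  from lr show ?thesis unfolding level_urules_def
  proof (elim insertE emptyE)
    assume rule: "(q, u, q1) = (QInit k, e (d (k - 1)), Q1 k)"
    then have "2 * w (d (k - 1)) + w (d' (k - 1)) = (2 * v (d (k - 1)) + v (d' (k - 1))) + 2"
      "w (d k) = v (d k)"
      using at ne by auto
    then show ?thesis using g low rule ne by (simp add: bound_Suc)
  next
    assume rule: "(q, u, q1) = (Q1 k, \<lambda>x. - e (d (k - 1)) x + 2 * e (d' (k - 1)) x, Q1 k)"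
    then have "2 * w (d (k - 1)) + w (d' (k - 1)) = 2 * v (d (k - 1)) + v (d' (k - 1))"
      "w (d k) = v (d k)"
      using at ne by auto
    then show ?thesis using g low rule by simp
  next
    assume "(q, u, q1) = (Q1 k, \<lambda>x. 0, Q2 k)"
    then show ?thesis using g low at ne by (auto elim: bound_mono)
  next
    assume rule: "(q, u, q1) = (Q2 k, \<lambda>x. - e (d' (k - 1)) x + e (d (k - 1)) x, Q2 k)"
    then have "w (d (k - 1)) + w (d' (k - 1)) = v (d (k - 1)) + v (d' (k - 1))"
      "w (d k) = v (d k)"
      using at ne by auto
    then show ?thesis using g low rule by simp
  next
    assume "(q, u, q1) = (QLoop k, \<lambda>x. 0, QInit k)"
    then show ?thesis using g low at ne by auto
  next
    assume rule: "(q, u, q1) = (QLoop k, \<lambda>x. - e (d k) x, QInit (k - 1))"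
    then have "w (d (k - 1)) = v (d (k - 1))" "w (d k) + 1 = v (d k)"
      using at ne by auto
    then show ?thesis
      using good_descend[OF k] g low rule by simp
  qed
qed

lemma split_good:
  assumes r: "(q, q1, q2) \<in> srules (B n)" and g: "good q1 v1" "good q2 v2"
    and H: "\<forall>c. v1 c + v2 c = v c"
  shows "good q v"
proof -
  obtain k where k: "2 \<le> k" and eq: "q = Q2 k" "q1 = QLoop k" "q2 = QLoop k"
    using srules_B_cases[OF r] by blast
  have "bound (Suc (tower (k - 1))) (v (d k)) (v (d (k - 1)) + v (d' (k - 1)))"
    if "low_zero (k - 1) v"
  proof -
    have "low_zero (k - 1) v1" "low_zero (k - 1) v2"
      using that H unfolding low_zero_def by (metis add_is_0)+
    then have "bound (Suc (tower (k - 1))) (v1 (d k) + v2 (d k))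
        (v1 (d (k - 1)) + v1 (d' (k - 1)) + v2 (d (k - 1)) + v2 (d' (k - 1)))"
      using g k eq by (intro bound_split) simp_all
    moreover have "v1 (d (k - 1)) + v1 (d' (k - 1)) + v2 (d (k - 1)) + v2 (d' (k - 1))
        = v (d (k - 1)) + v (d' (k - 1))"
      using H[rule_format, of "d (k - 1)"] H[rule_format, of "d' (k - 1)"] by simp
    ultimately show ?thesis
      using H[rule_format, of "d k"] by simp
  qed
  then show ?thesis using eq by simp
qed

lemma good_root:
  assumes "is_dtree (B n) t" "leaf_covering {QLeaf} t" "root t = (q, v)"
  shows "good q v"
  using assms
proof (induction arbitrary: q v rule: is_dtree.induct)
  case (leaf q v)
  then show ?case by (auto simp: leaf_covering_def)
next
  case (unary q v u q1 t w)
  then have "good q1 w" by (simp add: leaf_covering_def)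
  with unary show ?case using unary_good by auto
next
  case (split q v q1 q2 t1 t2 v1 v2)
  then have "good q1 v1" "good q2 v2" by (simp_all add: leaf_covering_def)
  with split show ?case using split_good by auto
qed

definition supported :: "nat \<Rightarrow> (ctr \<Rightarrow> nat) \<Rightarrow> bool" where
  "supported n v \<longleftrightarrow> (\<forall>c. c \<notin> ctrs (B n) \<longrightarrow> v c = 0)"

definition derivable :: "nat \<Rightarrow> st \<Rightarrow> (ctr \<Rightarrow> nat) \<Rightarrow> bool" where
  "derivable n q v \<longleftrightarrow> (\<exists>t. is_dtree (B n) t \<and> root t = (q, v) \<and> leaf_covering {QLeaf} t)"

lemma supported_upd: "supported n v \<Longrightarrow> c \<in> ctrs (B n) \<Longrightarrow> supported n (v(c := a))"
  by (auto simp: supported_def)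

lemma derivable_leaf: "1 \<le> n \<Longrightarrow> supported n v \<Longrightarrow> derivable n QLeaf v"
  unfolding derivable_def
  by (rule exI[of _ "DLeaf QLeaf v"])
    (auto intro: is_dtree.leaf simp: base_in_B is_config_def supported_def leaf_covering_def)

lemma derivable_unary:
  assumes r: "(q, u, q1) \<in> urules (B n)" and v: "supported n v" and w: "derivable n q1 w"
    and H: "\<forall>c. int (w c) = int (v c) + u c"
  shows "derivable n q v"
proof -
  obtain t where t: "is_dtree (B n) t" "root t = (q1, w)" "leaf_covering {QLeaf} t"
    using w unfolding derivable_def by blast
  have "is_config (B n) q v"
    using urule_source_state[OF r] v by (simp add: is_config_def supported_def)
  then have "is_dtree (B n) (DUn q v t)"
    using r t(1,2) H by (rule is_dtree.unary)
  with t(3) show ?thesis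
    unfolding derivable_def leaf_covering_def by (intro exI[of _ "DUn q v t"]) simp
qed

lemma derivable_split:
  assumes r: "(q, q1, q2) \<in> srules (B n)" and v: "supported n v"
    and v1: "derivable n q1 v1" and v2: "derivable n q2 v2" and H: "\<forall>c. v1 c + v2 c = v c"
  shows "derivable n q v"
proof -
  obtain t1 where t1: "is_dtree (B n) t1" "root t1 = (q1, v1)" "leaf_covering {QLeaf} t1"
    using v1 unfolding derivable_def by blast
  obtain t2 where t2: "is_dtree (B n) t2" "root t2 = (q2, v2)" "leaf_covering {QLeaf} t2"
    using v2 unfolding derivable_def by blast
  have "is_config (B n) q v"
    using srule_source_state[OF r] v by (simp add: is_config_def supported_def)
  then have "is_dtree (B n) (DSplit q v t1 t2)"
    using r t1(1) t2(1) t1(2) t2(2) H by (rule is_dtree.split)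
  with t1(3) t2(3) show ?thesis
    unfolding derivable_def leaf_covering_def by (intro exI[of _ "DSplit q v t1 t2"]) simp
qed

lemma derivable_level_step:
  assumes "2 \<le> k" "k \<le> n" "(q, u, q1) \<in> level_urules k"
    and "supported n v" "derivable n q1 w" "\<forall>c. int (w c) = int (v c) + u c"
  shows "derivable n q v"
  using level_in_B(1)[OF assms(1,2)] assms(3-6) by (blast intro: derivable_unary)

lemma Q1_pump:
  assumes k: "2 \<le> k" "k \<le> n" and v: "supported n v"
    and "derivable n (Q1 k) (v(d (k - 1) := x, d' (k - 1) := y + 2 * z))"
  shows "derivable n (Q1 k) (v(d (k - 1) := x + z, d' (k - 1) := y))"
  using assms(4)
proof (induction z arbitrary: y)
  case 0
  then show ?case by simp
next
  case (Suc z)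
  have "y + 2 * Suc z = (y + 2) + 2 * z" by simp
  then have step: "derivable n (Q1 k) (v(d (k - 1) := x + z, d' (k - 1) := y + 2))"
    using Suc.IH[of "y + 2"] Suc.prems by (simp only:)
  have sup: "supported n (v(d (k - 1) := x + Suc z, d' (k - 1) := y))"
    using v level_in_B[OF k] by (simp add: supported_upd)
  show ?case
    by (rule derivable_level_step[OF k _ sup step,
          where u = "\<lambda>x. - e (d (k - 1)) x + 2 * e (d' (k - 1)) x"])
      (auto simp: level_urules_def)
qed

lemma Q2_pump:
  assumes k: "2 \<le> k" "k \<le> n" and v: "supported n v"
    and "derivable n (Q2 k) (v(d (k - 1) := x + z, d' (k - 1) := y))"
  shows "derivable n (Q2 k) (v(d (k - 1) := x, d' (k - 1) := y + z))"
  using assms(4)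
proof (induction z arbitrary: x)
  case 0
  then show ?case by simp
next
  case (Suc z)
  have "x + Suc z = (x + 1) + z" by simp
  then have step: "derivable n (Q2 k) (v(d (k - 1) := x + 1, d' (k - 1) := y + z))"
    using Suc.IH[of "x + 1"] Suc.prems by (simp only:)
  have sup: "supported n (v(d (k - 1) := x, d' (k - 1) := y + Suc z))"
    using v level_in_B[OF k] by (simp add: supported_upd)
  show ?case
    by (rule derivable_level_step[OF k _ sup step,
          where u = "\<lambda>x. - e (d' (k - 1)) x + e (d (k - 1)) x"])
      (auto simp: level_urules_def)
qed

lemma round:
  assumes k: "2 \<le> k" "k \<le> n" and v: "supported n v" and c: "2 ^ Suc m \<le> v (d k)"
    and loop: "\<And>v'. supported n v' \<Longrightarrow> v (d (k - 1)) < v' (d (k - 1)) \<Longrightarrow> 2 ^ m \<le> v' (d k)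
      \<Longrightarrow> derivable n (QLoop k) v'"
  shows "derivable n (QInit k) v"
proof -
  let ?C = "d k" and ?D = "d (k - 1)" and ?D' = "d' (k - 1)"
  define x y where "x = v ?D" and "y = v ?D'"
  have ctrs: "?C \<in> ctrs (B n)" "?D \<in> ctrs (B n)" "?D' \<in> ctrs (B n)"
    using level_in_B[OF k] by auto
  have ne: "k - 1 \<noteq> k" using k by simp
  have sup: "supported n (v(?D := a, ?D' := b))" "supported n (v(?D := a, ?D' := b, ?C := c))"
    for a b c using v ctrs by (simp_all add: supported_upd)
  define v1 where "v1 = v(?D := y + x + 1, ?D' := 0, ?C := v ?C - 2 ^ m)"
  define v2 where "v2 = (\<lambda>c. if c = ?D then x + 1 else if c = ?C then 2 ^ m else 0)"
  have loop1: "derivable n (QLoop k) v1"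
    by (rule loop) (use sup c ne in \<open>auto simp: v1_def x_def\<close>)
  have loop2: "derivable n (QLoop k) v2"
    by (rule loop) (use ctrs ne in \<open>auto simp: v2_def x_def supported_def\<close>)
  have "\<forall>c. v1 c + v2 c = (v(?D := y + 2 * x + 2, ?D' := 0)) c"
    using c ne by (auto simp: v1_def v2_def x_def y_def)
  then have "derivable n (Q2 k) (v(?D := y + 2 * x + 2, ?D' := 0))"
    by (rule derivable_split[OF level_in_B(2)[OF k] sup(1) loop1 loop2])
  then have "derivable n (Q2 k) (v(?D := 0, ?D' := y + 2 * x + 2))"
    using Q2_pump[OF k v, of 0 "y + 2 * x + 2" 0] by simp
  then have "derivable n (Q1 k) (v(?D := 0, ?D' := y + 2 * (x + 1)))"
    by (rule derivable_level_step[OF k _ sup(1), where u = "\<lambda>x. 0", rotated])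
      (auto simp: level_urules_def)
  then have "derivable n (Q1 k) (v(?D := 0 + (x + 1), ?D' := y))"
    by (rule Q1_pump[OF k v])
  moreover have "v(?D := 0 + (x + 1), ?D' := y) = v(?D := x + 1)"
    by (rule ext) (simp add: y_def)
  ultimately have "derivable n (Q1 k) (v(?D := x + 1))"
    by (simp only:)
  then show ?thesis
    by (rule derivable_level_step[OF k _ v, where u = "e ?D", rotated])
      (auto simp: level_urules_def x_def)
qed

lemma loop_descend:
  assumes k: "2 \<le> k" "k \<le> n"
    and lower: "\<And>v. supported n v \<Longrightarrow> tower (k - 1) \<le> v (d (k - 1))
      \<Longrightarrow> derivable n (QInit (k - 1)) v"
    and v: "supported n v" and x: "tower (k - 1) \<le> v (d (k - 1))" and c: "1 \<le> v (d k)"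
  shows "derivable n (QLoop k) v"
proof -
  have ne: "k - 1 \<noteq> k" using k by simp
  have "derivable n (QInit (k - 1)) (v(d k := v (d k) - 1))"
    using lower supported_upd[OF v] level_in_B(3)[OF k] x ne by simp
  then show ?thesis
    by (rule derivable_level_step[OF k _ v, where u = "\<lambda>x. - e (d k) x", rotated])
      (use c in \<open>auto simp: level_urules_def\<close>)
qed

lemma loop_derivable:
  assumes k: "2 \<le> k" "k \<le> n"
    and lower: "\<And>v. supported n v \<Longrightarrow> tower (k - 1) \<le> v (d (k - 1))
      \<Longrightarrow> derivable n (QInit (k - 1)) v"
  shows "supported n v \<Longrightarrow> tower (k - 1) \<le> v (d (k - 1)) + m \<Longrightarrow> 2 ^ m \<le> v (d k)
    \<Longrightarrow> derivable n (QLoop k) v"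
proof (induction m arbitrary: v)
  case 0
  then show ?case using loop_descend[OF k lower] by simp
next
  case (Suc m)
  show ?case
  proof (cases "tower (k - 1) \<le> v (d (k - 1))")
    case True
    have "1 \<le> v (d k)"
      using Suc.prems(3) one_le_power[of "2::nat" "Suc m"] by linarith
    then show ?thesis using loop_descend[OF k lower Suc.prems(1) True] by simp
  next
    case False
    have "derivable n (QInit k) v"
    proof (rule round[OF k Suc.prems(1)])
      show "2 ^ Suc m \<le> v (d k)" using Suc.prems(3) .
      fix v' assume "supported n v'" "v (d (k - 1)) < v' (d (k - 1))" "2 ^ m \<le> v' (d k)"
      then show "derivable n (QLoop k) v'"
        using Suc.IH Suc.prems(2) by simp
    qed
    then show ?thesis
      by (rule derivable_level_step[OF k _ Suc.prems(1), where u = "\<lambda>x. 0", rotated])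
        (auto simp: level_urules_def)
  qed
qed

(* Completeness, for arbitrary values of the lower counters (no cleanliness needed). *)
lemma completeness:
  assumes "1 \<le> k" "k \<le> n" "supported n v" "tower k \<le> v (d k)"
  shows "derivable n (QInit k) v"
  using assms
proof (induction k arbitrary: v rule: nat_induct_at_least)
  case base
  have "derivable n QLeaf (v(d 1 := v (d 1) - 2))"
    using derivable_leaf base_in_B(3) supported_upd base(1,2) by blast
  then show ?case
    by (rule derivable_unary[OF base_in_B(1)[OF base(1)] base(2)]) (use base in auto)
next
  case (Suc k)
  have k: "2 \<le> Suc k" "Suc k \<le> n" using Suc by auto
  define m where "m = tower k - 1"
  have tm: "tower k = Suc m"
    using m_def by (cases k) auto
  show ?case
  proof (rule round[OF k Suc.prems(2)])
    show "2 ^ Suc m \<le> v (d (Suc k))"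
      using Suc.prems(3) tm by simp
    fix v' assume "supported n v'" "v (d (Suc k - 1)) < v' (d (Suc k - 1))" "2 ^ m \<le> v' (d (Suc k))"
    then show "derivable n (QLoop (Suc k)) v'"
      using loop_derivable[OF k, of v' m] Suc.IH k tm by simp
  qed
qed

theorem lemma6p1:
  fixes k :: nat and v0 :: "ctr \<Rightarrow> nat"
  assumes "k \<ge> 1"
    and "\<forall>c. c \<notin> ctrs (B k) \<longrightarrow> v0 c = 0"
    and "\<forall>i. 1 \<le> i \<and> i < k \<longrightarrow> v0 (d i) = 0 \<and> v0 (d' i) = 0"
  shows "(\<exists>t. is_dtree (B k) t \<and> root t = (QInit k, v0) \<and> leaf_covering {QLeaf} t)
         \<longleftrightarrow> v0 (d k) \<ge> tower k"
proof
  assume "\<exists>t. is_dtree (B k) t \<and> root t = (QInit k, v0) \<and> leaf_covering {QLeaf} t"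
  then have "good (QInit k) v0"
    using good_root by blast
  moreover have "low_zero k v0"
    using assms(3) by (simp add: low_zero_def)
  ultimately show "tower k \<le> v0 (d k)"
    by (rule good_init_tower[OF _ assms(1)])
next
  assume "tower k \<le> v0 (d k)"
  then have "derivable k (QInit k) v0"
    using completeness[OF assms(1) order_refl] assms(2) by (simp add: supported_def)
  then show "\<exists>t. is_dtree (B k) t \<and> root t = (QInit k, v0) \<and> leaf_covering {QLeaf} t"
    by (simp add: derivable_def)
qed

end
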